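(* Consider an $L$-layer network in which, at every layer $i=l,\dots,L$, the activation $X_i$ is passed through a signed $B$-bit clipped quantizer $\mathbb{Q}_i$ with clipping scalar $s_i$ satisfying $\Pr(|X_i|>s_i)>0$. Let $\Delta X_l$ be the true gradient of the loss with respect to $X_l$ and $\Delta^{(\mathrm{STE})}X_l$ its estimate when each $\partial\mathbb{Q}_i(x)/\partial x$ is replaced by the straight-through estimate $1$. Then there exists $\delta>0$ such that $$\frac{\mathrm{Var}\left(\Delta^{(\mathrm{STE})}X_l\right)}{\mathrm{Var}\left(\Delta X_l\right)}\ge(1+\delta)^{L-l}.$$
   Context: The clipped quantizer is $\mathbb{Q}(x)=\mathrm{clip}\big(s\cdot2^{1-B}\,\mathrm{round}(x\,2^{B-1}/s),-s,s\big)$, i.e. equal to $-s$ for $x<-s$, to $s$ for $x>s$, and to the nearest of the equally spaced levels in between otherwise. Its true derivative is taken to be $1$ on the discretization region $|x|\le s$ (small step approximation) and $0$ on the clipping region $|x|>s$. Gradient variances are computed in a second-order back-propagation model: the variance of the back-propagated gradient at layer $l$ equals a common factor times $\prod_{i=l}^{L}\mathbb{E}\big[|g_i(X_i)|^2\big]$, where $g_i$ is the derivative (true or estimated) used for the quantizer at layer $i$. *)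

theory Defs
  imports "HOL-Probability.Probability"
begin

definition clip :: "real \<Rightarrow> real \<Rightarrow> real \<Rightarrow> real" where
  "clip x a b = max a (min b x)"

definition quantizer :: "nat \<Rightarrow> real \<Rightarrow> real \<Rightarrow> real" where
  "quantizer B s x =
     clip (s * 2 powr (1 - real B) * real_of_int (round (x * 2 powr (real B - 1) / s))) (- s) s"

text \<open>True derivative of the quantizer: 1 on the discretization region, 0 on the clipping region.\<close>
definition true_dQ :: "real \<Rightarrow> real \<Rightarrow> real" where
  "true_dQ s x = (if \<bar>x\<bar> \<le> s then 1 else 0)"

definition ste_dQ :: "real \<Rightarrow> real \<Rightarrow> real" where
  "ste_dQ s x = 1"

text \<open>Second-order back-propagation model: variance of the gradient at layer l
  is a common factor C times the product over i = l..L of E[|g_i(X_i)|^2].\<close>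
definition grad_var ::
  "'a measure \<Rightarrow> real \<Rightarrow> (nat \<Rightarrow> real \<Rightarrow> real) \<Rightarrow> (nat \<Rightarrow> 'a \<Rightarrow> real) \<Rightarrow> nat \<Rightarrow> nat \<Rightarrow> real" where
  "grad_var P C g X l L = C * (\<Prod>i\<in>{l..L}. integral\<^sup>L P (\<lambda>\<omega>. \<bar>g i (X i \<omega>)\<bar> ^ 2))"

end

theory Submission
  imports Defs
begin

text \<open>With STE every layer contributes the factor E[1] = 1, so the estimated variance is just C.
  With the true derivative, layer i contributes E[true_dQ^2] = 1 - p i, where p i > 0 is its
  clipping probability. Taking \<delta> = min p i, each factor satisfies
  (1 + \<delta>)(1 - p i) \<le> (1 + p i)(1 - p i) \<le> 1, and multiplying over the layers gives the claim
  (even with exponent L - l + 1).\<close>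

lemma (in prob_space) integral_true_dQ_square:
  assumes "Y \<in> borel_measurable M"
  shows "(\<integral>\<omega>. (true_dQ t (Y \<omega>))\<^sup>2 \<partial>M) = 1 - prob {\<omega> \<in> space M. \<bar>Y \<omega>\<bar> > t}"
proof -
  have sets: "{\<omega> \<in> space M. \<bar>Y \<omega>\<bar> \<le> t} \<in> events" using assms by measurable
  have "(\<integral>\<omega>. (true_dQ t (Y \<omega>))\<^sup>2 \<partial>M) = (\<integral>\<omega>. indicator {\<omega> \<in> space M. \<bar>Y \<omega>\<bar> \<le> t} \<omega> \<partial>M)"
    by (intro Bochner_Integration.integral_cong) (auto simp: true_dQ_def indicator_def)
  also have "\<dots> = prob {\<omega> \<in> space M. \<bar>Y \<omega>\<bar> \<le> t}"
    using sets by simp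
  also have "\<dots> = 1 - prob (space M - {\<omega> \<in> space M. \<bar>Y \<omega>\<bar> \<le> t})"
    using sets by (simp add: prob_compl)
  also have "space M - {\<omega> \<in> space M. \<bar>Y \<omega>\<bar> \<le> t} = {\<omega> \<in> space M. \<bar>Y \<omega>\<bar> > t}"
    by auto
  finally show ?thesis .
qed

lemma (in prob_space) grad_var_ste_dQ: "grad_var M C (\<lambda>i. ste_dQ (s i)) X l L = C"
  by (simp add: grad_var_def ste_dQ_def prob_space)

lemma (in prob_space) grad_var_true_dQ:
  assumes "\<forall>i\<in>{l..L}. X i \<in> borel_measurable M"
  shows "grad_var M C (\<lambda>i. true_dQ (s i)) X l L
           = C * (\<Prod>i\<in>{l..L}. 1 - prob {\<omega> \<in> space M. \<bar>X i \<omega>\<bar> > s i})"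
  unfolding grad_var_def using assms by (auto intro!: prod.cong simp: integral_true_dQ_square)

lemma power_card_mult_prod_one_minus_le_one:
  fixes q :: "'i \<Rightarrow> real"
  assumes "finite A" "0 \<le> d" "\<forall>i\<in>A. d \<le> q i \<and> q i \<le> 1"
  shows "(1 + d) ^ card A * (\<Prod>i\<in>A. 1 - q i) \<le> 1"
proof -
  have factor: "0 \<le> (1 + d) * (1 - q i) \<and> (1 + d) * (1 - q i) \<le> 1" if "i \<in> A" for i
  proof -
    have "(1 + d) * (1 - q i) \<le> (1 + q i) * (1 - q i)"
      using assms(3) that by (intro mult_right_mono) auto
    also have "\<dots> = 1 - (q i)\<^sup>2" by (simp add: algebra_simps power2_eq_square)
    finally show ?thesis using assms that by (auto intro: order_trans[of _ "1 - (q i)\<^sup>2"])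
  qed
  have "(1 + d) ^ card A * (\<Prod>i\<in>A. 1 - q i) = (\<Prod>i\<in>A. (1 + d) * (1 - q i))"
    by (simp add: prod.distrib)
  also have "\<dots> \<le> (\<Prod>i\<in>A. 1)"
    by (rule prod_mono) (use factor in auto)
  finally show ?thesis by simp
qed

theorem proposition1:
  fixes P :: "'a measure" and X :: "nat \<Rightarrow> 'a \<Rightarrow> real" and s :: "nat \<Rightarrow> real"
    and C :: real and l L :: nat
  assumes "prob_space P"
    and "l \<le> L"
    and "C > 0"
    and "\<forall>i\<in>{l..L}. X i \<in> borel_measurable P"
    and "\<forall>i\<in>{l..L}. s i > 0"
    and "\<forall>i\<in>{l..L}. measure P {\<omega> \<in> space P. \<bar>X i \<omega>\<bar> > s i} > 0"
  shows "\<exists>\<delta>>0. grad_var P C (\<lambda>i. ste_dQ (s i)) X l L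
                 \<ge> (1 + \<delta>) ^ (L - l) * grad_var P C (\<lambda>i. true_dQ (s i)) X l L"
proof -
  interpret prob_space P by (rule assms(1))
  define p where "p i = prob {\<omega> \<in> space P. \<bar>X i \<omega>\<bar> > s i}" for i
  define \<delta> where "\<delta> = Min (p ` {l..L})"
  have "\<delta> > 0" using assms(2,6) by (simp add: \<delta>_def p_def)
  have prod_nonneg: "0 \<le> (\<Prod>i\<in>{l..L}. 1 - p i)"
    by (intro prod_nonneg) (simp add: p_def)
  have "(1 + \<delta>) ^ (L - l) * (\<Prod>i\<in>{l..L}. 1 - p i) \<le> (1 + \<delta>) ^ card {l..L} * (\<Prod>i\<in>{l..L}. 1 - p i)"
    using \<open>\<delta> > 0\<close> prod_nonneg by (intro mult_right_mono power_increasing) auto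
  also have "\<dots> \<le> 1"
    using \<open>\<delta> > 0\<close> by (intro power_card_mult_prod_one_minus_le_one) (auto simp: \<delta>_def p_def)
  finally have "(1 + \<delta>) ^ (L - l) * (C * (\<Prod>i\<in>{l..L}. 1 - p i)) \<le> C"
    using assms(3) mult_left_mono[of _ 1 C] by (simp add: mult.left_commute)
  then show ?thesis
    using \<open>\<delta> > 0\<close> assms(4) by (auto simp: grad_var_ste_dQ grad_var_true_dQ p_def)
qed

end
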